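(* Let $V$ be a finite set, let $d$ be a monotone and consistent symmetric set function on $V$, and let $\tau\in\mathbb{R}$. Then the function $\hat d$ defined by $\hat d(S,T)=\min\{\tau,d(S,T)\}$ for disjoint $S,T\subseteq V$ is a monotone and consistent symmetric set function on $V$.
   Context: A symmetric set function $d$ on a finite set $V$ assigns a real number $d(S,T)$ to every ordered pair $(S,T)$ of disjoint subsets of $V$, such that $d(S,T)=d(T,S)$. It is monotone if $d(S,T')\leq d(S,T)$ whenever $S,T$ are disjoint and $T'\subseteq T$. It is consistent if for all pairwise disjoint $R,S,T\subseteq V$, $d(S,R)\geq d(T,R)$ implies $d(S,R\cup T)\geq d(S\cup R,T)$. *)

theory Defs
  imports Main "HOL.Real"
begin

text \<open>A symmetric set function on V: values d S T on ordered pairs of disjoint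
subsets of V (values outside such pairs are irrelevant), with d S T = d T S.\<close>

definition symmetric_set_function :: "'a set \<Rightarrow> ('a set \<Rightarrow> 'a set \<Rightarrow> real) \<Rightarrow> bool" where
  "symmetric_set_function V d \<longleftrightarrow>
     (\<forall>S T. S \<subseteq> V \<longrightarrow> T \<subseteq> V \<longrightarrow> S \<inter> T = {} \<longrightarrow> d S T = d T S)"

definition monotone_ssf :: "'a set \<Rightarrow> ('a set \<Rightarrow> 'a set \<Rightarrow> real) \<Rightarrow> bool" where
  "monotone_ssf V d \<longleftrightarrow>
     (\<forall>S T T'. S \<subseteq> V \<longrightarrow> T \<subseteq> V \<longrightarrow> S \<inter> T = {} \<longrightarrow> T' \<subseteq> T \<longrightarrow> d S T' \<le> d S T)"

definition consistent_ssf :: "'a set \<Rightarrow> ('a set \<Rightarrow> 'a set \<Rightarrow> real) \<Rightarrow> bool" where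
  "consistent_ssf V d \<longleftrightarrow>
     (\<forall>R S T. R \<subseteq> V \<longrightarrow> S \<subseteq> V \<longrightarrow> T \<subseteq> V \<longrightarrow>
        R \<inter> S = {} \<longrightarrow> R \<inter> T = {} \<longrightarrow> S \<inter> T = {} \<longrightarrow>
        d S R \<ge> d T R \<longrightarrow> d S (R \<union> T) \<ge> d (S \<union> R) T)"

end

theory Submission
  imports Defs
begin

text \<open>For consistency, if
  the premise of the truncated function holds only because d S R was cut down to \<tau>, then
  monotonicity gives \<tau> \<le> d S R \<le> d S (R \<union> T), so the truncated conclusion reads
  min \<tau> (d (S \<union> R) T) \<le> \<tau> and holds trivially.\<close>

lemma symmetric_set_function_min:
  assumes "symmetric_set_function V d"
  shows "symmetric_set_function V (\<lambda>S T. min \<tau> (d S T))"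
  using assms unfolding symmetric_set_function_def by auto

lemma monotone_ssf_min:
  assumes "monotone_ssf V d"
  shows "monotone_ssf V (\<lambda>S T. min \<tau> (d S T))"
  using assms unfolding monotone_ssf_def by (meson min.mono order_refl)

lemma consistent_ssf_min:
  assumes mono: "monotone_ssf V d" and cons: "consistent_ssf V d"
  shows "consistent_ssf V (\<lambda>S T. min \<tau> (d S T))"
  unfolding consistent_ssf_def
proof (intro allI impI)
  fix R S T
  assume subsets: "R \<subseteq> V" "S \<subseteq> V" "T \<subseteq> V"
    and disjoint: "R \<inter> S = {}" "R \<inter> T = {}" "S \<inter> T = {}"
    and premise: "min \<tau> (d T R) \<le> min \<tau> (d S R)"
  show "min \<tau> (d (S \<union> R) T) \<le> min \<tau> (d S (R \<union> T))"
  proof (cases "d T R \<le> d S R")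
    case True
    with cons subsets disjoint have "d (S \<union> R) T \<le> d S (R \<union> T)"
      unfolding consistent_ssf_def by blast
    then show ?thesis by linarith
  next
    case False
    with premise have "\<tau> \<le> d S R" by linarith
    also have "d S R \<le> d S (R \<union> T)"
    proof -
      have "R \<union> T \<subseteq> V" "S \<inter> (R \<union> T) = {}" using subsets disjoint by auto
      then show ?thesis using mono \<open>S \<subseteq> V\<close> unfolding monotone_ssf_def by blast
    qed
    finally show ?thesis by linarith
  qed
qed

theorem lemma3:
  fixes V :: "'a set" and d :: "'a set \<Rightarrow> 'a set \<Rightarrow> real" and \<tau> :: real
  assumes "finite V"
    and "symmetric_set_function V d"
    and "monotone_ssf V d"
    and "consistent_ssf V d"
  shows "symmetric_set_function V (\<lambda>S T. min \<tau> (d S T))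
       \<and> monotone_ssf V (\<lambda>S T. min \<tau> (d S T))
       \<and> consistent_ssf V (\<lambda>S T. min \<tau> (d S T))"
  using symmetric_set_function_min[OF assms(2)] monotone_ssf_min[OF assms(3)]
    consistent_ssf_min[OF assms(3,4)]
  by blast

end
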